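(* Let $f$ satisfy the standing assumptions below, let $t>0$, $x\in\mathbb{R}$, and let $\Phi_1(\xi,u_1,u_2,u_3)$ be as defined in the context. Then for each $t$ and each $0<u_3<u_2<u_1<1$, $$\lim_{\xi\to0}\Phi_1(\xi,u_1,u_2,u_3)=-\infty,\qquad\lim_{\xi\to1}\Phi_1(\xi,u_1,u_2,u_3)=+\infty .$$
   Context: Standing assumptions: $f:(0,1)\to\mathbb{R}$ is the inverse of a smooth strictly decreasing function $u_0:\mathbb{R}\to(0,1)$ with $u_0(-\infty)=1$, $u_0(+\infty)=0$; thus $f$ is smooth with $f'<0$, $f(0^+)=+\infty$, $f(1^-)=-\infty$; moreover $f'''(u)<0$ for $u$ in a neighborhood of $0$ and of $1$. Let $H(u)=x-30tu^2-f(u)$. $\Phi_1(\xi,u_1,u_2,u_3)$ is the unique solution of the Euler–Poisson–Darboux system $2(u_i-u_j)\partial_{u_i}\partial_{u_j}\Phi_1=\partial_{u_i}\Phi_1-\partial_{u_j}\Phi_1$ ($i,j=1,2,3$), $2(\xi-u_i)\partial_\xi\partial_{u_i}\Phi_1=\partial_\xi\Phi_1-2\partial_{u_i}\Phi_1$ ($i=1,2,3$), with boundary condition $\Phi_1(u,u,u,u)=\frac23H''(u)=\frac23(-60t-f''(u))$; explicitly $$\Phi_1=M\int_{[-1,1]^3}\frac{H''\!\left(\frac{1+\mu_3}{2}\left(\frac{1+\mu_2}{2}\left(\frac{1+\mu_1}{2}\xi+\frac{1-\mu_1}{2}u_1\right)+\frac{1-\mu_2}{2}u_2\right)+\frac{1-\mu_3}{2}u_3\right)}{\sqrt{(1-\mu_1)(1-\mu_2)(1-\mu_3)}}(1+\mu_2)^{1/2}(1+\mu_3)\,d\mu_1d\mu_2d\mu_3,$$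 with the constant $M$ chosen so that the boundary condition holds. *)

theory Defs
  imports "HOL-Analysis.Analysis"
begin

definition smooth_on :: "real set \<Rightarrow> (real \<Rightarrow> real) \<Rightarrow> bool" where
  "smooth_on S g \<longleftrightarrow> (\<forall>n::nat. \<forall>y\<in>S. ((deriv ^^ n) g) differentiable (at y))"

definition standing_assumptions :: "(real \<Rightarrow> real) \<Rightarrow> bool" where
  "standing_assumptions f \<longleftrightarrow>
     (\<exists>u0 :: real \<Rightarrow> real.
        smooth_on UNIV u0 \<and>
        (\<forall>a b. a < b \<longrightarrow> u0 b < u0 a) \<and>
        (\<forall>y. u0 y \<in> {0<..<1}) \<and>
        (u0 \<longlongrightarrow> 1) at_bot \<and> (u0 \<longlongrightarrow> 0) at_top \<and>
        (\<forall>y. f (u0 y) = y) \<and> (\<forall>u\<in>{0<..<1}. u0 (f u) = u)) \<and>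
     smooth_on {0<..<1} f \<and>
     (\<forall>u\<in>{0<..<1}. deriv f u < 0) \<and>
     filterlim f at_top (at_right 0) \<and> filterlim f at_bot (at_left 1) \<and>
     (\<exists>d>0. \<forall>u\<in>{0<..<d}. (deriv ^^ 3) f u < 0) \<and>
     (\<exists>d>0. \<forall>u\<in>{1-d<..<1}. (deriv ^^ 3) f u < 0)"

definition H :: "(real \<Rightarrow> real) \<Rightarrow> real \<Rightarrow> real \<Rightarrow> real \<Rightarrow> real" where
  "H f t x u = x - 30 * t * u^2 - f u"

definition cube3 :: "(real \<times> real \<times> real) set" where
  "cube3 = {-1..1} \<times> {-1..1} \<times> {-1..1}"

definition phi_weight :: "real \<times> real \<times> real \<Rightarrow> real" where
  "phi_weight m = (case m of (m1, m2, m3) \<Rightarrow>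
      sqrt (1 + m2) * (1 + m3) / sqrt ((1 - m1) * (1 - m2) * (1 - m3)))"

definition phi_point :: "real \<Rightarrow> real \<Rightarrow> real \<Rightarrow> real \<Rightarrow> real \<times> real \<times> real \<Rightarrow> real" where
  "phi_point xi u1 u2 u3 m = (case m of (m1, m2, m3) \<Rightarrow>
      (1 + m3)/2 * ((1 + m2)/2 * ((1 + m1)/2 * xi + (1 - m1)/2 * u1) + (1 - m2)/2 * u2)
      + (1 - m3)/2 * u3)"

(* M chosen so that Phi_1(u,u,u,u) = 2/3 H''(u) *)
definition Mconst :: real where
  "Mconst = (2/3) / (set_lebesgue_integral lborel cube3 phi_weight)"

definition Phi1 :: "(real \<Rightarrow> real) \<Rightarrow> real \<Rightarrow> real \<Rightarrow> real \<Rightarrow> real \<Rightarrow> real \<Rightarrow> real \<Rightarrow> real" where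
  "Phi1 f t x xi u1 u2 u3 = Mconst *
     set_lebesgue_integral lborel cube3
       (\<lambda>m. (deriv ^^ 2) (H f t x) (phi_point xi u1 u2 u3 m) * phi_weight m)"

end

theory Submission
  imports Defs
begin

(* After substituting H'' = -60 t - f'', Phi_1 is M times a constant minus the integral J(xi) of
   f''(p) against the weight over the cube, where p = p(xi, u, mu) is the evaluation point. So it
   suffices that J(xi) tends to +oo as xi -> 0 and to -oo as xi -> 1. The second case is the first
   one for the reflected function v |-> -f(1 - v), since p(xi, u, mu) = 1 - p(1 - xi, 1 - u, mu).
   Near 0, f''' < 0 makes f'' decreasing, and f'' is bounded below on the range of p. On the wedge
   mu_1 in [1 - delta, 1 - 2 xi], mu_1 <= mu_2, mu_3 < 1 one has p <= 2 (1 - mu_1) and weight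
   >= 1 / (1 - mu_1). Integrating out mu_2 and mu_3 and writing a = 1 - mu_1, J(xi) is bounded
   below, up to constants, by the integral of a f''(2 a) over [2 xi, delta]. By parts this is
   -xi f'(4 xi) + f(4 xi) / 4 + O(1) >= f(4 xi) / 4 + O(1), which tends to +oo since f' < 0 and
   f(0+) = +oo. *)

lemma antimono_on_if_has_real_derivative_nonpos:
  fixes g g' :: "real \<Rightarrow> real"
  assumes "\<And>x. x \<in> {a<..<b} \<Longrightarrow> (g has_real_derivative g' x) (at x)"
    and "\<And>x. x \<in> {a<..<b} \<Longrightarrow> g' x \<le> 0"
  shows "antimono_on {a<..<b} g"
proof (rule monotone_onI)
  fix x y assume "x \<in> {a<..<b}" "y \<in> {a<..<b}" "x \<le> y"
  then show "g y \<le> g x"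
    using assms by (intro deriv_nonpos_imp_antimono[of x y g g']) auto
qed

lemma has_real_derivative_reflect:
  assumes "(h has_real_derivative D) (at (1 - v))"
  shows "((\<lambda>v. h (1 - v)) has_real_derivative - D) (at v)"
proof -
  have "((\<lambda>v. 1 - v) has_real_derivative -1) (at v)"
    by (auto intro!: derivative_eq_intros)
  from DERIV_chain2[OF assms this] show ?thesis
    by simp
qed

lemma filterlim_one_minus_at_left: "filterlim (\<lambda>x::real. 1 - x) (at_right 0) (at_left 1)"
  unfolding filterlim_at
proof
  show "eventually (\<lambda>x. 1 - x \<in> {0<..} \<and> 1 - x \<noteq> 0) (at_left (1::real))"
    unfolding eventually_at_left_field by (intro exI[of _ 0]) auto
  show "((\<lambda>x. 1 - x) \<longlongrightarrow> (0::real)) (at_left 1)"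
    by (auto intro!: tendsto_eq_intros)
qed

lemma filterlim_one_minus_at_right: "filterlim (\<lambda>x::real. 1 - x) (at_left 1) (at_right 0)"
  unfolding filterlim_at
proof
  show "eventually (\<lambda>x. 1 - x \<in> {..<1} \<and> 1 - x \<noteq> 1) (at_right (0::real))"
    unfolding eventually_at_right_field by (intro exI[of _ 1]) auto
  show "((\<lambda>x. 1 - x) \<longlongrightarrow> (1::real)) (at_right 0)"
    by (auto intro!: tendsto_eq_intros)
qed

lemma filterlim_pos_mult_const_minus:
  fixes h :: "'a \<Rightarrow> real"
  assumes "0 < a"
  shows "filterlim h at_top F \<Longrightarrow> filterlim (\<lambda>x. a * (b - h x)) at_bot F"
    and "filterlim h at_bot F \<Longrightarrow> filterlim (\<lambda>x. a * (b - h x)) at_top F"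
proof -
  assume "filterlim h at_top F"
  then have "filterlim (\<lambda>x. b - h x) at_bot F"
    unfolding filterlim_uminus_at_bot using filterlim_tendsto_add_at_top[OF tendsto_const, of h F "- b"]
    by simp
  then show "filterlim (\<lambda>x. a * (b - h x)) at_bot F"
    by (rule filterlim_tendsto_pos_mult_at_bot[OF tendsto_const \<open>0 < a\<close>])
next
  assume "filterlim h at_bot F"
  then have "filterlim (\<lambda>x. b - h x) at_top F"
    using filterlim_tendsto_add_at_top[OF tendsto_const, of "\<lambda>x. - h x" F b]
    by (simp add: filterlim_uminus_at_bot)
  then show "filterlim (\<lambda>x. a * (b - h x)) at_top F"
    by (rule filterlim_tendsto_pos_mult_at_top[OF tendsto_const \<open>0 < a\<close>])
qed

lemma smooth_on_has_real_derivative: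
  assumes "smooth_on S g" "y \<in> S"
  shows "((deriv ^^ n) g has_real_derivative (deriv ^^ Suc n) g y) (at y)"
  using assms unfolding smooth_on_def by (simp add: DERIV_deriv_iff_real_differentiable)

lemma smooth_on_low_order_derivatives:
  assumes "smooth_on S g" "y \<in> S"
  shows "(g has_real_derivative deriv g y) (at y)"
    and "(deriv g has_real_derivative (deriv ^^ 2) g y) (at y)"
    and "((deriv ^^ 2) g has_real_derivative (deriv ^^ 3) g y) (at y)"
  using smooth_on_has_real_derivative[OF assms, of 0] smooth_on_has_real_derivative[OF assms, of 1]
    smooth_on_has_real_derivative[OF assms, of 2]
  by (simp_all add: numeral_2_eq_2 numeral_3_eq_3)

lemma smooth_on_continuous_on: "smooth_on S g \<Longrightarrow> continuous_on S ((deriv ^^ n) g)"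
  using smooth_on_has_real_derivative
  by (intro continuous_at_imp_continuous_on ballI DERIV_isCont) blast

section \<open>The weight\<close>

lemma lborel_real3_eq: "(lborel :: (real \<times> real \<times> real) measure) = lborel \<Otimes>\<^sub>M (lborel \<Otimes>\<^sub>M lborel)"
  by (simp add: lborel_prod)

lemma nn_integral_lborel3_product:
  fixes g1 g2 g3 :: "real \<Rightarrow> ennreal"
  assumes [measurable]: "g1 \<in> borel_measurable borel" "g2 \<in> borel_measurable borel" "g3 \<in> borel_measurable borel"
  shows "(\<integral>\<^sup>+ m. g1 (fst m) * g2 (fst (snd m)) * g3 (snd (snd m)) \<partial>lborel)
        = (\<integral>\<^sup>+ x. g1 x \<partial>lborel) * (\<integral>\<^sup>+ x. g2 x \<partial>lborel) * (\<integral>\<^sup>+ x. g3 x \<partial>lborel)"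
proof -
  have inner: "(\<integral>\<^sup>+ y. g2 (fst y) * g3 (snd y) \<partial>(lborel \<Otimes>\<^sub>M lborel))
      = (\<integral>\<^sup>+ x. g2 x \<partial>lborel) * (\<integral>\<^sup>+ x. g3 x \<partial>lborel)"
    by (subst lborel.nn_integral_fst[symmetric]) (simp_all add: nn_integral_cmult nn_integral_multc)
  show ?thesis
    unfolding lborel_real3_eq
    by (subst lborel_pair.nn_integral_fst[symmetric], measurable)
       (simp add: mult.assoc nn_integral_cmult nn_integral_multc inner[unfolded mult.assoc])
qed

definition inv_sqrt_one_minus :: "real \<Rightarrow> real" where
  "inv_sqrt_one_minus s = indicator {-1..1} s * (1 - s) powr (-1/2)"

lemma inv_sqrt_one_minus_nonneg: "0 \<le> inv_sqrt_one_minus s"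
  by (simp add: inv_sqrt_one_minus_def)

lemma inv_sqrt_one_minus_borel_measurable [measurable]: "inv_sqrt_one_minus \<in> borel_measurable borel"
  unfolding inv_sqrt_one_minus_def[abs_def] by measurable

lemma nn_integral_inv_sqrt_one_minus:
  "(\<integral>\<^sup>+ s. ennreal (inv_sqrt_one_minus s) \<partial>lborel) = ennreal (2 * sqrt 2)"
proof -
  have "(\<integral>\<^sup>+ s. ennreal (inv_sqrt_one_minus s) \<partial>lborel)
     = (\<integral>\<^sup>+ y. ennreal (indicator {-1..1} (1 + (-1) * y) * (1 - (1 + (-1) * y)) powr (-1/2)) \<partial>lborel)"
    using nn_integral_real_affine[of "\<lambda>s. ennreal (inv_sqrt_one_minus s)" "-1" 1]
    by (simp add: inv_sqrt_one_minus_def)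
  also have "\<dots> = (\<integral>\<^sup>+ y. ennreal (indicator {0..2} y * y powr (-1/2)) \<partial>lborel)"
    by (auto intro!: nn_integral_cong simp: indicator_def)
  also have "\<dots> = ennreal (2 powr (-1/2 + 1) / (-1/2 + 1))"
    by (rule nn_integral_has_integral_lebesgue) (use has_integral_powr_from_0[of "-1/2" 2] in simp_all)
  also have "2 powr (-1/2 + 1) / (-1/2 + 1) = 2 * sqrt (2::real)"
    by (simp add: powr_half_sqrt)
  finally show ?thesis .
qed

lemma phi_weight_eq:
  "phi_weight m = sqrt (1 + fst (snd m)) * (1 + snd (snd m))
                  / sqrt ((1 - fst m) * (1 - fst (snd m)) * (1 - snd (snd m)))"
  unfolding phi_weight_def by (simp add: case_prod_beta)

lemma cube3_iff: "m \<in> cube3 \<longleftrightarrow> fst m \<in> {-1..1} \<and> fst (snd m) \<in> {-1..1} \<and> snd (snd m) \<in> {-1..1}"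
  unfolding cube3_def by (cases m) auto

lemma cube3_borel [measurable]: "cube3 \<in> sets borel"
  unfolding cube3_def by (auto intro!: borel_closed closed_Times)

lemma borel_measurable_real3_coordinates [measurable]:
  "(\<lambda>m::real \<times> real \<times> real. fst m) \<in> borel_measurable borel"
  "(\<lambda>m::real \<times> real \<times> real. fst (snd m)) \<in> borel_measurable borel"
  "(\<lambda>m::real \<times> real \<times> real. snd (snd m)) \<in> borel_measurable borel"
  by (intro borel_measurable_continuous_onI continuous_intros)+

lemma phi_weight_borel_measurable [measurable]: "phi_weight \<in> borel_measurable borel"
  unfolding phi_weight_eq[abs_def] by measurable

lemma phi_weight_nonneg: "m \<in> cube3 \<Longrightarrow> 0 \<le> phi_weight m"
  unfolding phi_weight_eq cube3_iff by (auto intro!: divide_nonneg_nonneg mult_nonneg_nonneg)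

lemma phi_weight_le_inv_sqrt_product:
  assumes m: "m \<in> cube3"
  shows "phi_weight m
           \<le> 4 * (inv_sqrt_one_minus (fst m) * inv_sqrt_one_minus (fst (snd m)) * inv_sqrt_one_minus (snd (snd m)))"
proof -
  have k: "inv_sqrt_one_minus s = 1 / sqrt (1 - s)" if "s \<in> {-1..1}" for s
    using that
    by (cases "s = 1") (auto simp: inv_sqrt_one_minus_def powr_minus_divide powr_half_sqrt[symmetric])
  have "sqrt (1 + fst (snd m)) \<le> sqrt 4"
    using m by (intro real_sqrt_le_mono) (auto simp: cube3_iff)
  moreover have "0 \<le> 1 + snd (snd m)" "1 + snd (snd m) \<le> 2"
    using m by (auto simp: cube3_iff)
  ultimately have num: "sqrt (1 + fst (snd m)) * (1 + snd (snd m)) \<le> 4"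
    using mult_mono[of "sqrt (1 + fst (snd m))" 2 "1 + snd (snd m)" 2] by simp
  have "phi_weight m = sqrt (1 + fst (snd m)) * (1 + snd (snd m))
          * (1 / sqrt (1 - fst m) * (1 / sqrt (1 - fst (snd m))) * (1 / sqrt (1 - snd (snd m))))"
    unfolding phi_weight_eq by (simp add: real_sqrt_mult)
  also have "\<dots> \<le> 4 * (1 / sqrt (1 - fst m) * (1 / sqrt (1 - fst (snd m))) * (1 / sqrt (1 - snd (snd m))))"
    using m by (intro mult_right_mono[OF num]) (auto simp: cube3_iff)
  finally show ?thesis
    using m by (simp add: k cube3_iff)
qed

lemma set_integrable_phi_weight: "set_integrable lborel cube3 phi_weight"
  unfolding set_integrable_def
proof (rule integrableI_bounded)
  let ?k = inv_sqrt_one_minus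
  have k_measurable: "(\<lambda>s. ennreal (?k s)) \<in> borel_measurable borel"
    by measurable
  show "(\<lambda>m. indicat_real cube3 m *\<^sub>R phi_weight m) \<in> borel_measurable lborel"
    by measurable
  have "(\<integral>\<^sup>+ m. ennreal (norm (indicat_real cube3 m *\<^sub>R phi_weight m)) \<partial>lborel)
      \<le> (\<integral>\<^sup>+ m. ennreal (4 * (?k (fst m) * ?k (fst (snd m)) * ?k (snd (snd m)))) \<partial>lborel)"
  proof (intro nn_integral_mono)
    fix m :: "real \<times> real \<times> real"
    show "ennreal (norm (indicat_real cube3 m *\<^sub>R phi_weight m))
        \<le> ennreal (4 * (?k (fst m) * ?k (fst (snd m)) * ?k (snd (snd m))))"
      using phi_weight_le_inv_sqrt_product[of m] phi_weight_nonneg[of m] inv_sqrt_one_minus_nonneg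
      by (cases "m \<in> cube3") (auto intro!: ennreal_leI mult_nonneg_nonneg)
  qed
  also have "\<dots> = (\<integral>\<^sup>+ m. ennreal 4 * (ennreal (?k (fst m)) * ennreal (?k (fst (snd m))) * ennreal (?k (snd (snd m))))
      \<partial>lborel)"
    by (simp add: ennreal_mult inv_sqrt_one_minus_nonneg)
  also have "\<dots> = ennreal 4 * ennreal (2 * sqrt 2) ^ 3"
    by (simp add: nn_integral_cmult nn_integral_lborel3_product[OF k_measurable k_measurable k_measurable]
        nn_integral_inv_sqrt_one_minus power3_eq_cube)
  finally show "(\<integral>\<^sup>+ m. ennreal (norm (indicat_real cube3 m *\<^sub>R phi_weight m)) \<partial>lborel) < \<infinity>"
    by (rule order.strict_trans1) (simp add: ennreal_mult_less_top power_less_top_ennreal)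
qed

lemma phi_weight_ge_one:
  assumes "fst m \<in> {0..1/2}" "fst (snd m) \<in> {0..1/2}" "snd (snd m) \<in> {0..1/2}"
  shows "1 \<le> phi_weight m"
proof -
  have den: "0 < sqrt ((1 - fst m) * (1 - fst (snd m)) * (1 - snd (snd m)))"
    "sqrt ((1 - fst m) * (1 - fst (snd m)) * (1 - snd (snd m))) \<le> 1"
    using assms by (auto intro!: mult_le_one)
  have "1 \<le> sqrt (1 + fst (snd m)) * (1 + snd (snd m))"
    using assms mult_mono[of 1 "sqrt (1 + fst (snd m))" 1 "1 + snd (snd m)"] by simp
  then show ?thesis
    unfolding phi_weight_eq le_divide_eq_1_pos[OF den(1)] using den(2) by linarith
qed

lemma set_integral_phi_weight_pos: "0 < (LINT m:cube3|lborel. phi_weight m)"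
proof -
  let ?B = "{0..1/2::real}"
  have "0 < (\<integral>\<^sup>+ m. indicator ?B (fst m) * indicator ?B (fst (snd m)) * indicator ?B (snd (snd m)) \<partial>lborel)"
    by (subst nn_integral_lborel3_product) (auto simp: ennreal_zero_less_mult_iff ennreal_inverse_positive)
  also have "\<dots> \<le> (\<integral>\<^sup>+ m. ennreal (indicator cube3 m * phi_weight m) \<partial>lborel)"
    using phi_weight_ge_one phi_weight_nonneg
    by (intro nn_integral_mono) (auto simp: indicator_def cube3_iff)
  also have "\<dots> = ennreal (LINT m:cube3|lborel. phi_weight m)"
    using set_integrable_phi_weight unfolding set_integrable_def set_lebesgue_integral_def real_scaleR_def
    by (intro nn_integral_eq_integral) (auto simp: phi_weight_nonneg indicator_def)
  finally show ?thesis
    by simp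
qed

lemma Mconst_pos: "0 < Mconst"
  unfolding Mconst_def using set_integral_phi_weight_pos by simp

section \<open>The evaluation point\<close>

lemma phi_point_eq:
  "phi_point xi u1 u2 u3 m =
     (1 + snd (snd m))/2 * ((1 + fst (snd m))/2 * ((1 + fst m)/2 * xi + (1 - fst m)/2 * u1)
       + (1 - fst (snd m))/2 * u2) + (1 - snd (snd m))/2 * u3"
  unfolding phi_point_def by (simp add: case_prod_beta)

lemma continuous_on_phi_point: "continuous_on A (phi_point xi u1 u2 u3)"
  unfolding phi_point_eq[abs_def] by (intro continuous_intros) auto

lemma phi_point_reflect:
  "phi_point xi u1 u2 u3 m = 1 - phi_point (1 - xi) (1 - u1) (1 - u2) (1 - u3) m"
  unfolding phi_point_eq by (simp add: field_simps)

lemma convex_comb_between: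
  fixes a b s :: real
  assumes "a \<in> {lo..hi}" "b \<in> {lo..hi}" "s \<in> {-1..1}"
  shows "(1 + s)/2 * a + (1 - s)/2 * b \<in> {lo..hi}"
  using convexD[OF convex_real_interval(5), of a lo hi b "(1 + s)/2" "(1 - s)/2"] assms
  by (simp add: add_divide_distrib[symmetric])

lemma phi_point_between:
  assumes "m \<in> cube3" "xi \<in> {lo..hi}" "u1 \<in> {lo..hi}" "u2 \<in> {lo..hi}" "u3 \<in> {lo..hi}"
  shows "phi_point xi u1 u2 u3 m \<in> {lo..hi}"
  using assms unfolding phi_point_eq cube3_iff by (intro convex_comb_between) auto

lemma phi_point_in_unit_interval:
  assumes "m \<in> cube3" "xi \<in> {0<..<1}" "u1 \<in> {0<..<1}" "u2 \<in> {0<..<1}" "u3 \<in> {0<..<1}"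
  shows "phi_point xi u1 u2 u3 m \<in> {0<..<1}"
proof -
  let ?lo = "min (min xi u1) (min u2 u3)" and ?hi = "max (max xi u1) (max u2 u3)"
  have "phi_point xi u1 u2 u3 m \<in> {?lo..?hi}"
    by (rule phi_point_between) (use assms in auto)
  moreover have "{?lo..?hi} \<subseteq> {0<..<1}"
    using assms by auto
  ultimately show ?thesis
    by blast
qed

lemma convex_comb_le_add:
  fixes a b s :: real
  assumes "0 \<le> a" "b \<le> 1" "s \<in> {-1..1}"
  shows "(1 + s)/2 * a + (1 - s)/2 * b \<le> a + (1 - s)/2"
proof -
  have "(1 + s)/2 * a \<le> a"
    using assms by (intro mult_left_le_one_le) auto
  moreover have "(1 - s)/2 * b \<le> (1 - s)/2"
    using assms by (intro mult_left_le) auto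
  ultimately show ?thesis
    by (simp add: field_simps)
qed

lemma phi_point_le:
  assumes "m \<in> cube3" "0 \<le> xi" "u1 \<in> {0..1}" "u2 \<in> {0..1}" "u3 \<in> {0..1}"
  shows "phi_point xi u1 u2 u3 m \<le> xi + ((1 - fst m) + (1 - fst (snd m)) + (1 - snd (snd m)))/2"
proof -
  define y where "y = (1 + fst m)/2 * xi + (1 - fst m)/2 * u1"
  define z where "z = (1 + fst (snd m))/2 * y + (1 - fst (snd m))/2 * u2"
  have s: "fst m \<in> {-1..1}" "fst (snd m) \<in> {-1..1}" "snd (snd m) \<in> {-1..1}"
    using assms(1) by (auto simp: cube3_iff)
  have y: "0 \<le> y" "y \<le> xi + (1 - fst m)/2"
    unfolding y_def using assms s convex_comb_le_add[of xi u1 "fst m"] by auto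
  have z: "0 \<le> z" "z \<le> y + (1 - fst (snd m))/2"
    unfolding z_def using assms s y convex_comb_le_add[of y u2 "fst (snd m)"] by auto
  have "phi_point xi u1 u2 u3 m \<le> z + (1 - snd (snd m))/2"
    unfolding phi_point_eq y_def[symmetric] z_def[symmetric] using assms s z by (intro convex_comb_le_add) auto
  then show ?thesis
    using y z by (simp add: field_simps)
qed

definition phi_integral :: "(real \<Rightarrow> real) \<Rightarrow> real \<Rightarrow> real \<Rightarrow> real \<Rightarrow> real \<Rightarrow> real" where
  "phi_integral g xi u1 u2 u3 = (LINT m:cube3|lborel. g (phi_point xi u1 u2 u3 m) * phi_weight m)"

lemma set_integrable_phi_integrand:
  assumes g: "continuous_on {0<..<1} g"
    and in01: "xi \<in> {0<..<1}" "u1 \<in> {0<..<1}" "u2 \<in> {0<..<1}" "u3 \<in> {0<..<1}"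
  shows "set_integrable lborel cube3 (\<lambda>m. g (phi_point xi u1 u2 u3 m) * phi_weight m)"
proof -
  let ?lo = "min (min xi u1) (min u2 u3)" and ?hi = "max (max xi u1) (max u2 u3)"
  have "{?lo..?hi} \<subseteq> {0<..<1}"
    using in01 by auto
  then have "compact (g ` {?lo..?hi})"
    by (intro compact_continuous_image continuous_on_subset[OF g]) auto
  then obtain B where B: "\<forall>v\<in>{?lo..?hi}. \<bar>g v\<bar> \<le> B"
    by (auto dest!: compact_imp_bounded simp: bounded_iff)
  have "continuous_on cube3 (\<lambda>m. g (phi_point xi u1 u2 u3 m))"
    using phi_point_in_unit_interval in01
    by (intro continuous_on_compose2[OF g continuous_on_phi_point]) auto
  then have "(\<lambda>m. indicator cube3 m *\<^sub>R g (phi_point xi u1 u2 u3 m)) \<in> borel_measurable borel"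
    by (rule borel_measurable_continuous_on_indicator[OF cube3_borel])
  then have "(\<lambda>m. indicator cube3 m *\<^sub>R g (phi_point xi u1 u2 u3 m) * phi_weight m) \<in> borel_measurable borel"
    by measurable
  then have "set_borel_measurable lborel cube3 (\<lambda>m. g (phi_point xi u1 u2 u3 m) * phi_weight m)"
    unfolding set_borel_measurable_def by (simp add: mult.assoc)
  moreover have "AE m in lborel. m \<in> cube3 \<longrightarrow>
      norm (g (phi_point xi u1 u2 u3 m) * phi_weight m) \<le> norm (B * phi_weight m)"
  proof (intro AE_I2 impI)
    fix m assume m: "m \<in> cube3"
    have "phi_point xi u1 u2 u3 m \<in> {?lo..?hi}"
      by (rule phi_point_between[OF m]) auto
    then have "\<bar>g (phi_point xi u1 u2 u3 m)\<bar> \<le> B"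
      using B by blast
    then show "norm (g (phi_point xi u1 u2 u3 m) * phi_weight m) \<le> norm (B * phi_weight m)"
      using phi_weight_nonneg[OF m] by (auto simp: abs_mult intro: mult_right_mono)
  qed
  ultimately show ?thesis
    by (intro set_integrable_bound[OF set_integrable_mult_right[OF set_integrable_phi_weight]])
qed

lemma phi_integral_cong:
  assumes "\<And>v. v \<in> {0<..<1} \<Longrightarrow> g v = h v"
    and "xi \<in> {0<..<1}" "u1 \<in> {0<..<1}" "u2 \<in> {0<..<1}" "u3 \<in> {0<..<1}"
  shows "phi_integral g xi u1 u2 u3 = phi_integral h xi u1 u2 u3"
  unfolding phi_integral_def
  using assms phi_point_in_unit_interval by (intro set_lebesgue_integral_cong) auto

lemma phi_integral_add_const:
  assumes "continuous_on {0<..<1} g"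
    and "xi \<in> {0<..<1}" "u1 \<in> {0<..<1}" "u2 \<in> {0<..<1}" "u3 \<in> {0<..<1}"
  shows "phi_integral (\<lambda>v. g v + c) xi u1 u2 u3
           = phi_integral g xi u1 u2 u3 + c * (LINT m:cube3|lborel. phi_weight m)"
  unfolding phi_integral_def distrib_right
  using assms by (subst set_integral_add(2))
    (auto intro: set_integrable_phi_integrand set_integrable_phi_weight)

lemma phi_integral_uminus: "phi_integral (\<lambda>v. - g v) xi u1 u2 u3 = - phi_integral g xi u1 u2 u3"
  unfolding phi_integral_def set_lebesgue_integral_def by simp

lemma phi_integral_reflect:
  "phi_integral g xi u1 u2 u3 = phi_integral (\<lambda>v. g (1 - v)) (1 - xi) (1 - u1) (1 - u2) (1 - u3)"
  unfolding phi_integral_def by (subst phi_point_reflect) simp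

section \<open>The wedge estimate\<close>

definition wedge :: "real \<Rightarrow> real \<Rightarrow> (real \<times> real \<times> real) set" where
  "wedge a b = {m. fst m \<in> {a..b} \<and> fst (snd m) \<in> {fst m..<1} \<and> snd (snd m) \<in> {fst m..<1}}"

lemma wedge_borel [measurable]: "wedge a b \<in> sets borel"
proof -
  have "wedge a b = {m \<in> space borel. a \<le> fst m \<and> fst m \<le> b \<and> fst m \<le> fst (snd m) \<and> fst (snd m) < 1
      \<and> fst m \<le> snd (snd m) \<and> snd (snd m) < 1}"
    by (auto simp: wedge_def)
  also have "\<dots> \<in> sets borel"
    by measurable
  finally show ?thesis .
qed

lemma wedge_subset_cube3: "-1 \<le> a \<Longrightarrow> wedge a b \<subseteq> cube3"
  unfolding wedge_def by (auto simp: cube3_iff)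

lemma nn_integral_wedge:
  fixes psi :: "real \<Rightarrow> real"
  assumes [measurable]: "psi \<in> borel_measurable borel" and nonneg: "\<And>x. 0 \<le> psi x" and "b < 1"
  shows "(\<integral>\<^sup>+ m. ennreal (indicator (wedge a b) m * psi (fst m)) \<partial>lborel)
           = (\<integral>\<^sup>+ x. ennreal (indicator {a..b} x * (psi x * (1 - x)^2)) \<partial>lborel)"
proof -
  have "(\<integral>\<^sup>+ m. ennreal (indicator (wedge a b) m * psi (fst m)) \<partial>lborel)
      = (\<integral>\<^sup>+ x. \<integral>\<^sup>+ y. ennreal (indicator (wedge a b) (x, y) * psi x) \<partial>lborel \<partial>lborel)"
    unfolding lborel_real3_eq by (subst lborel_pair.nn_integral_fst[symmetric]) (simp_all add: lborel_prod)
  also have "\<dots> = (\<integral>\<^sup>+ x. \<integral>\<^sup>+ y. ennreal (indicator {a..b} x * psi x) * indicator ({x..<1} \<times> {x..<1}) y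
      \<partial>lborel \<partial>lborel)"
    by (intro nn_integral_cong) (auto simp: wedge_def indicator_def)
  also have "\<dots> = (\<integral>\<^sup>+ x. ennreal (indicator {a..b} x * psi x) * emeasure (lborel \<Otimes>\<^sub>M lborel) ({x..<1} \<times> {x..<1})
      \<partial>lborel)"
    unfolding lborel_prod[symmetric]
    by (subst nn_integral_cmult) (auto intro!: borel_measurable_indicator)
  also have "\<dots> = (\<integral>\<^sup>+ x. ennreal (indicator {a..b} x * (psi x * (1 - x)^2)) \<partial>lborel)"
  proof (intro nn_integral_cong)
    fix x :: real
    have "x \<in> {a..b} \<Longrightarrow> emeasure (lborel \<Otimes>\<^sub>M lborel) ({x..<1} \<times> {x..<1::real}) = ennreal ((1 - x)^2)"
      using \<open>b < 1\<close>
      by (subst lborel.emeasure_pair_measure_Times) (auto simp: ennreal_mult[symmetric] power2_eq_square)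
    then show "ennreal (indicator {a..b} x * psi x) * emeasure (lborel \<Otimes>\<^sub>M lborel) ({x..<1} \<times> {x..<1::real})
        = ennreal (indicator {a..b} x * (psi x * (1 - x)^2))"
      using nonneg[of x] by (cases "x \<in> {a..b}") (simp_all add: ennreal_mult[symmetric])
  qed
  finally show ?thesis .
qed

lemma set_integral_wedge:
  fixes psi :: "real \<Rightarrow> real"
  assumes "b < 1" and cont: "continuous_on {a..b} psi" and nonneg: "\<And>x. x \<in> {a..b} \<Longrightarrow> 0 \<le> psi x"
    and I: "((\<lambda>x. psi x * (1 - x)^2) has_integral I) {a..b}"
  shows "set_integrable lborel (wedge a b) (\<lambda>m. psi (fst m))"
    and "(LINT m:wedge a b|lborel. psi (fst m)) = I"
proof -
  define psi' where "psi' x = indicator {a..b} x * psi x" for x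
  have [measurable]: "psi' \<in> borel_measurable borel"
    unfolding psi'_def using borel_measurable_continuous_on_indicator[OF _ cont] by simp
  have psi'_nonneg: "0 \<le> psi' x" for x
    using nonneg by (simp add: psi'_def indicator_def)
  have psi': "indicator (wedge a b) m * psi (fst m) = indicator (wedge a b) m * psi' (fst m)" for m
    by (auto simp: wedge_def psi'_def indicator_def)
  have "(\<integral>\<^sup>+ m. ennreal (indicator (wedge a b) m * psi' (fst m)) \<partial>lborel)
      = (\<integral>\<^sup>+ x. ennreal (indicator {a..b} x * (psi' x * (1 - x)^2)) \<partial>lborel)"
    by (rule nn_integral_wedge) (simp_all add: psi'_nonneg \<open>b < 1\<close>)
  also have "\<dots> = (\<integral>\<^sup>+ x. ennreal (indicator {a..b} x * (psi x * (1 - x)^2)) \<partial>lborel)"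
    by (intro nn_integral_cong) (simp add: psi'_def indicator_def)
  also have "\<dots> = ennreal I"
    using nonneg I by (intro nn_integral_has_integral_lebesgue) auto
  finally have "(\<integral>\<^sup>+ m. ennreal (indicator (wedge a b) m * psi' (fst m)) \<partial>lborel) = ennreal I" .
  moreover have "0 \<le> I"
    using has_integral_nonneg[OF I] nonneg by auto
  moreover have "(\<lambda>m. indicator (wedge a b) m * psi' (fst m)) \<in> borel_measurable lborel"
    by measurable
  moreover have "AE m in lborel. 0 \<le> indicator (wedge a b) m * psi' (fst m)"
    using psi'_nonneg by (intro AE_I2) simp
  ultimately have "integrable lborel (\<lambda>m. indicator (wedge a b) m * psi' (fst m))
      \<and> integral\<^sup>L lborel (\<lambda>m. indicator (wedge a b) m * psi' (fst m)) = I"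
    by (intro nn_integral_eq_integrable[THEN iffD1])
  then show "set_integrable lborel (wedge a b) (\<lambda>m. psi (fst m))"
    and "(LINT m:wedge a b|lborel. psi (fst m)) = I"
    unfolding set_integrable_def set_lebesgue_integral_def real_scaleR_def psi' by simp_all
qed

lemma inverse_le_phi_weight_on_wedge:
  assumes m: "m \<in> wedge a b" and "0 \<le> a"
  shows "1 / (1 - fst m) \<le> phi_weight m"
proof -
  define a1 a2 a3 where "a1 = 1 - fst m" and "a2 = 1 - fst (snd m)" and "a3 = 1 - snd (snd m)"
  have a: "0 < a2" "a2 \<le> a1" "0 < a3" "a3 \<le> a1" "0 < a1" "a1 \<le> 1"
    using assms unfolding a1_def a2_def a3_def wedge_def by auto
  have "a1 * a2 * a3 \<le> a1 * a1"
    using a mult_mono[of a2 a1 a3 1] by (simp add: mult.assoc mult_left_mono)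
  then have "sqrt (a1 * a2 * a3) \<le> sqrt (a1 * a1)"
    by (rule real_sqrt_le_mono)
  moreover have "0 < a1 * a2 * a3"
    using a by simp
  ultimately have den: "sqrt (a1 * a2 * a3) \<le> a1" "0 < sqrt (a1 * a2 * a3)"
    using a by (simp, simp)
  have num: "1 \<le> sqrt (1 + fst (snd m)) * (1 + snd (snd m))"
    using assms mult_mono[of 1 "sqrt (1 + fst (snd m))" 1 "1 + snd (snd m)"] by (auto simp: wedge_def)
  have "1 / a1 \<le> 1 / sqrt (a1 * a2 * a3)"
    using den a by (intro divide_left_mono mult_pos_pos) auto
  also have "\<dots> \<le> sqrt (1 + fst (snd m)) * (1 + snd (snd m)) / sqrt (a1 * a2 * a3)"
    using num den by (intro divide_right_mono) auto
  finally show ?thesis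
    unfolding phi_weight_eq a1_def a2_def a3_def .
qed

lemma phi_point_le_on_wedge:
  assumes "m \<in> wedge a b" "-1 \<le> a" "0 \<le> xi" "u1 \<in> {0..1}" "u2 \<in> {0..1}" "u3 \<in> {0..1}"
  shows "phi_point xi u1 u2 u3 m \<le> xi + 3/2 * (1 - fst m)"
proof -
  have "m \<in> cube3"
    using wedge_subset_cube3 assms(1,2) by blast
  then have "phi_point xi u1 u2 u3 m \<le> xi + ((1 - fst m) + (1 - fst (snd m)) + (1 - snd (snd m)))/2"
    by (rule phi_point_le) (use assms in auto)
  moreover have "fst m \<le> fst (snd m)" "fst m \<le> snd (snd m)"
    using assms(1) by (auto simp: wedge_def)
  ultimately show ?thesis
    by (simp add: field_simps)
qed

(* F is an antiderivative of a * (g2 (2 * a) + C) (integrate a * g2 (2 * a) by parts once);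
   substituting a = 1 - x gives the wedge profile times the area (1 - x)^2 of its (mu_2, mu_3) section. *)
lemma has_integral_wedge_profile:
  fixes g g1 g2 :: "real \<Rightarrow> real" and C :: real
  assumes g: "\<And>v. v \<in> {0<..<1} \<Longrightarrow> (g has_real_derivative g1 v) (at v)"
    and g1: "\<And>v. v \<in> {0<..<1} \<Longrightarrow> (g1 has_real_derivative g2 v) (at v)"
    and "0 < s" "s \<le> \<delta>" "\<delta> < 1/2"
  defines "F \<equiv> \<lambda>a. a * g1 (2 * a) / 2 - g (2 * a) / 4 + C * a^2 / 2"
  shows "((\<lambda>x. (g2 (2 * (1 - x)) + C) / (1 - x) * (1 - x)^2) has_integral F \<delta> - F s) {1 - \<delta>..1 - s}"
proof -
  have "((\<lambda>x. (1 - x) * (g2 (2 * (1 - x)) + C)) has_integral (- F (1 - (1 - s))) - (- F (1 - (1 - \<delta>))))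
      {1 - \<delta>..1 - s}"
  proof (rule fundamental_theorem_of_calculus)
    show "1 - \<delta> \<le> 1 - s"
      using assms by simp
    fix x assume "x \<in> {1 - \<delta>..1 - s}"
    then have y: "2 * (1 - x) \<in> {0<..<1}"
      using assms by auto
    have dg: "((\<lambda>x. g (2 * (1 - x))) has_real_derivative g1 (2 * (1 - x)) * (-2)) (at x)"
      by (rule DERIV_chain2[of g, where g = "\<lambda>x. 2 * (1 - x)", OF g[OF y]]) (auto intro!: derivative_eq_intros)
    have dg1: "((\<lambda>x. g1 (2 * (1 - x))) has_real_derivative g2 (2 * (1 - x)) * (-2)) (at x)"
      by (rule DERIV_chain2[of g1, where g = "\<lambda>x. 2 * (1 - x)", OF g1[OF y]]) (auto intro!: derivative_eq_intros)
    have "((\<lambda>x. - F (1 - x)) has_real_derivative (1 - x) * (g2 (2 * (1 - x)) + C)) (at x)"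
      unfolding F_def
      apply (intro dg[THEN DERIV_cong] dg1[THEN DERIV_cong] derivative_eq_intros refl)
      apply (rule refl | simp)+
      apply (simp add: field_simps)
      done
    then show "((\<lambda>x. - F (1 - x)) has_vector_derivative (1 - x) * (g2 (2 * (1 - x)) + C))
        (at x within {1 - \<delta>..1 - s})"
      by (simp add: has_real_derivative_iff_has_vector_derivative[symmetric] has_field_derivative_at_within)
  qed
  then have "((\<lambda>x. (1 - x) * (g2 (2 * (1 - x)) + C)) has_integral F \<delta> - F s) {1 - \<delta>..1 - s}"
    by simp
  then show ?thesis
    by (rule has_integral_cong[THEN iffD1, rotated]) (use assms in \<open>auto simp: power2_eq_square\<close>)
qed

lemma antimono_near_zero_bounded_below:
  fixes g :: "real \<Rightarrow> real"
  assumes cont: "continuous_on {0<..<1} g" and "0 < d" and anti: "antimono_on {0<..<d} g" and "U < 1"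
  obtains C where "0 \<le> C" "\<And>v. v \<in> {0<..U} \<Longrightarrow> - C \<le> g v"
proof -
  define e where "e = min (d/2) (1/2)"
  have e: "0 < e" "e < d" "e < 1"
    using \<open>0 < d\<close> by (auto simp: e_def)
  have "compact (g ` {e..U})"
    by (intro compact_continuous_image continuous_on_subset[OF cont]) (use e \<open>U < 1\<close> in auto)
  then obtain M where M: "\<forall>v\<in>{e..U}. \<bar>g v\<bar> \<le> M"
    by (auto dest!: compact_imp_bounded simp: bounded_iff)
  show ?thesis
  proof (rule that[of "max 0 (max (- g e) M)"])
    fix v assume v: "v \<in> {0<..U}"
    show "- max 0 (max (- g e) M) \<le> g v"
    proof (cases "v \<le> e")
      case True
      then have "g e \<le> g v"
        using monotone_onD[OF anti, of v e] e v by auto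
      then show ?thesis
        by simp
    next
      case False
      then have "v \<in> {e..U}"
        using v by auto
      then have "\<bar>g v\<bar> \<le> M"
        using M by blast
      then have "- M \<le> g v"
        by (simp add: abs_le_iff)
      moreover have "M \<le> max 0 (max (- g e) M)"
        by simp
      ultimately show ?thesis
        by linarith
    qed
  qed simp
qed

(* The shift by C makes the right-hand side nonnegative, which settles the case off the wedge;
   on the wedge p <= 2 (1 - mu_1), so g2 (p) >= g2 (2 (1 - mu_1)) as g2 is decreasing. *)
lemma wedge_profile_le_phi_integrand:
  fixes g2 :: "real \<Rightarrow> real"
  assumes m: "m \<in> cube3" and xi: "0 < xi" "2 * xi \<le> \<delta>" "\<delta> \<le> 1/4"
    and anti: "antimono_on {0<..2 * \<delta>} g2"
    and lower: "\<And>v. v \<in> {0<..U} \<Longrightarrow> - C \<le> g2 v" and U: "2 * \<delta> \<le> U" "U < 1"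
    and u: "u1 \<in> {0<..U}" "u2 \<in> {0<..U}" "u3 \<in> {0<..U}"
  shows "indicator (wedge (1 - \<delta>) (1 - 2 * xi)) m * ((g2 (2 * (1 - fst m)) + C) / (1 - fst m))
           \<le> (g2 (phi_point xi u1 u2 u3 m) + C) * phi_weight m"
proof -
  let ?p = "phi_point xi u1 u2 u3 m"
  have "?p \<in> {min xi (min u1 (min u2 u3))..U}"
    by (rule phi_point_between[OF m]) (use xi u U in auto)
  then have p: "?p \<in> {0<..U}"
    using xi u by auto
  have w: "0 \<le> phi_weight m"
    by (rule phi_weight_nonneg[OF m])
  show ?thesis
  proof (cases "m \<in> wedge (1 - \<delta>) (1 - 2 * xi)")
    case False
    then show ?thesis
      using lower[OF p] w by simp
  next
    case True
    define a where "a = 1 - fst m"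
    have a: "2 * xi \<le> a" "a \<le> \<delta>"
      using True by (auto simp: wedge_def a_def)
    have "?p \<le> xi + 3/2 * a"
      unfolding a_def by (rule phi_point_le_on_wedge[OF True]) (use xi u U in auto)
    then have "?p \<le> 2 * a"
      using a by linarith
    then have "g2 (2 * a) + C \<le> g2 ?p + C"
      using monotone_onD[OF anti, of ?p "2 * a"] p a xi by auto
    moreover have "0 \<le> g2 (2 * a) + C"
      using lower[of "2 * a"] a xi U by auto
    moreover have "1 / a \<le> phi_weight m"
      unfolding a_def by (rule inverse_le_phi_weight_on_wedge[OF True]) (use xi in auto)
    moreover have "0 < a"
      using a xi by auto
    ultimately have "(g2 (2 * a) + C) * (1 / a) \<le> (g2 ?p + C) * phi_weight m"
      by (intro mult_mono) auto
    then show ?thesis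
      using True by (simp add: a_def)
  qed
qed

lemma set_integral_wedge_profile:
  fixes g g1 g2 :: "real \<Rightarrow> real" and C :: real
  assumes g: "\<And>v. v \<in> {0<..<1} \<Longrightarrow> (g has_real_derivative g1 v) (at v)"
    and g1: "\<And>v. v \<in> {0<..<1} \<Longrightarrow> (g1 has_real_derivative g2 v) (at v)"
    and cont: "continuous_on {0<..<1} g2"
    and xi: "0 < xi" "2 * xi \<le> \<delta>" "\<delta> \<le> 1/4"
    and lower: "\<And>v. v \<in> {0<..U} \<Longrightarrow> - C \<le> g2 v" and "2 * \<delta> \<le> U"
  defines "F \<equiv> \<lambda>a. a * g1 (2 * a) / 2 - g (2 * a) / 4 + C * a^2 / 2"
    and "psi \<equiv> \<lambda>x. (g2 (2 * (1 - x)) + C) / (1 - x)"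
  shows "set_integrable lborel (wedge (1 - \<delta>) (1 - 2 * xi)) (\<lambda>m. psi (fst m))"
    and "(LINT m:wedge (1 - \<delta>) (1 - 2 * xi)|lborel. psi (fst m)) = F \<delta> - F (2 * xi)"
proof -
  have "(\<lambda>x. 2 * (1 - x)) ` {1 - \<delta>..1 - 2 * xi} \<subseteq> {0<..<1}"
    using xi by auto
  then have "continuous_on {1 - \<delta>..1 - 2 * xi} psi"
    unfolding psi_def using xi
    by (intro continuous_intros continuous_on_compose2[OF cont]) auto
  moreover have "0 \<le> psi x" if "x \<in> {1 - \<delta>..1 - 2 * xi}" for x
    unfolding psi_def using that xi \<open>2 * \<delta> \<le> U\<close> lower[of "2 * (1 - x)"] by (auto intro!: divide_nonneg_pos)
  moreover have "((\<lambda>x. psi x * (1 - x)^2) has_integral F \<delta> - F (2 * xi)) {1 - \<delta>..1 - 2 * xi}"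
    unfolding psi_def F_def by (rule has_integral_wedge_profile[OF g g1]) (use xi in auto)
  ultimately show "set_integrable lborel (wedge (1 - \<delta>) (1 - 2 * xi)) (\<lambda>m. psi (fst m))"
    and "(LINT m:wedge (1 - \<delta>) (1 - 2 * xi)|lborel. psi (fst m)) = F \<delta> - F (2 * xi)"
    using xi by (auto intro!: set_integral_wedge)
qed

lemma phi_integral_ge_wedge_profile:
  fixes g g1 g2 :: "real \<Rightarrow> real" and C :: real
  assumes g: "\<And>v. v \<in> {0<..<1} \<Longrightarrow> (g has_real_derivative g1 v) (at v)"
    and g1: "\<And>v. v \<in> {0<..<1} \<Longrightarrow> (g1 has_real_derivative g2 v) (at v)"
    and cont: "continuous_on {0<..<1} g2"
    and xi: "0 < xi" "2 * xi \<le> \<delta>" "\<delta> \<le> 1/4"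
    and anti: "antimono_on {0<..2 * \<delta>} g2"
    and lower: "\<And>v. v \<in> {0<..U} \<Longrightarrow> - C \<le> g2 v" and U: "2 * \<delta> \<le> U" "U < 1"
    and u: "u1 \<in> {0<..U}" "u2 \<in> {0<..U}" "u3 \<in> {0<..U}"
  defines "F \<equiv> \<lambda>a. a * g1 (2 * a) / 2 - g (2 * a) / 4 + C * a^2 / 2"
  shows "F \<delta> - F (2 * xi) \<le> phi_integral g2 xi u1 u2 u3 + C * (LINT m:cube3|lborel. phi_weight m)"
proof -
  let ?W = "wedge (1 - \<delta>) (1 - 2 * xi)" and ?psi = "\<lambda>x. (g2 (2 * (1 - x)) + C) / (1 - x)"
  note wedge = set_integral_wedge_profile[OF g g1 cont xi lower U(1)]
  have in01: "xi \<in> {0<..<1}" "u1 \<in> {0<..<1}" "u2 \<in> {0<..<1}" "u3 \<in> {0<..<1}"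
    using xi u U by auto
  have integrable: "set_integrable lborel cube3 (\<lambda>m. (g2 (phi_point xi u1 u2 u3 m) + C) * phi_weight m)"
    unfolding distrib_right
    by (intro set_integral_add(1) set_integrable_phi_integrand[OF cont in01] set_integrable_mult_right
        set_integrable_phi_weight)
  have "F \<delta> - F (2 * xi) = (LINT m|lborel. indicator ?W m * ?psi (fst m))"
    using wedge(2) by (simp add: F_def set_lebesgue_integral_def)
  also have "\<dots> \<le> (LINT m|lborel. indicator cube3 m * ((g2 (phi_point xi u1 u2 u3 m) + C) * phi_weight m))"
  proof (rule integral_mono)
    fix m :: "real \<times> real \<times> real"
    have "m \<notin> cube3 \<Longrightarrow> m \<notin> ?W"
      using wedge_subset_cube3[of "1 - \<delta>" "1 - 2 * xi"] xi by auto
    then show "indicator ?W m * ?psi (fst m)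
        \<le> indicator cube3 m * ((g2 (phi_point xi u1 u2 u3 m) + C) * phi_weight m)"
      using wedge_profile_le_phi_integrand[OF _ xi anti lower U u, of m]
      by (cases "m \<in> cube3") simp_all
  qed (use wedge(1) integrable in \<open>simp_all add: set_integrable_def\<close>)
  also have "\<dots> = phi_integral (\<lambda>v. g2 v + C) xi u1 u2 u3"
    by (simp add: phi_integral_def set_lebesgue_integral_def)
  also have "\<dots> = phi_integral g2 xi u1 u2 u3 + C * (LINT m:cube3|lborel. phi_weight m)"
    by (rule phi_integral_add_const[OF cont in01])
  finally show ?thesis .
qed

lemma phi_integral_lower_bound:
  fixes g g1 g2 :: "real \<Rightarrow> real"
  assumes g: "\<And>v. v \<in> {0<..<1} \<Longrightarrow> (g has_real_derivative g1 v) (at v)"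
    and g1: "\<And>v. v \<in> {0<..<1} \<Longrightarrow> (g1 has_real_derivative g2 v) (at v)"
    and cont: "continuous_on {0<..<1} g2"
    and neg: "\<And>v. v \<in> {0<..<1} \<Longrightarrow> g1 v < 0"
    and "0 < d" and anti: "antimono_on {0<..<d} g2"
    and u: "u1 \<in> {0<..<1}" "u2 \<in> {0<..<1}" "u3 \<in> {0<..<1}"
  obtains K \<epsilon> where "0 < \<epsilon>" "\<And>xi. 0 < xi \<Longrightarrow> xi \<le> \<epsilon> \<Longrightarrow> K + g (4 * xi) / 4 \<le> phi_integral g2 xi u1 u2 u3"
proof -
  define \<delta> where "\<delta> = min (1/4) (d/4)"
  define U where "U = max (max u1 u2) (max u3 (2 * \<delta>))"
  have \<delta>: "0 < \<delta>" "\<delta> \<le> 1/4" "2 * \<delta> < d"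
    using \<open>0 < d\<close> by (auto simp: \<delta>_def)
  have U: "2 * \<delta> \<le> U" "U < 1" "u1 \<in> {0<..U}" "u2 \<in> {0<..U}" "u3 \<in> {0<..U}"
    using u \<delta> by (auto simp: U_def)
  obtain C where C: "0 \<le> C" "\<And>v. v \<in> {0<..U} \<Longrightarrow> - C \<le> g2 v"
    using antimono_near_zero_bounded_below[OF cont \<open>0 < d\<close> anti \<open>U < 1\<close>] by blast
  have anti': "antimono_on {0<..2 * \<delta>} g2"
    by (rule monotone_on_subset[OF anti]) (use \<delta> in auto)
  define F where "F a = a * g1 (2 * a) / 2 - g (2 * a) / 4 + C * a^2 / 2" for a
  show ?thesis
  proof (rule that[of "\<delta> / 2" "F \<delta> - C * (LINT m:cube3|lborel. phi_weight m) - C"])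
    fix xi :: real assume "0 < xi" "xi \<le> \<delta> / 2"
    then have xi: "0 < xi" "2 * xi \<le> \<delta>"
      by auto
    have "xi * g1 (4 * xi) \<le> 0"
      using neg[of "4 * xi"] xi \<delta> by (simp add: mult_nonneg_nonpos)
    moreover have "(2 * xi)^2 \<le> 1"
      using xi \<delta> by (intro power_le_one) auto
    then have "C * (2 * xi)^2 / 2 \<le> C"
      using C(1) mult_left_le[of "(2 * xi)^2" C] by linarith
    ultimately have "F (2 * xi) \<le> C - g (4 * xi) / 4"
      by (simp add: F_def)
    then show "F \<delta> - C * (LINT m:cube3|lborel. phi_weight m) - C + g (4 * xi) / 4 \<le> phi_integral g2 xi u1 u2 u3"
      using phi_integral_ge_wedge_profile[OF g g1 cont xi \<delta>(2) anti' C(2) U] unfolding F_def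
      by linarith
  qed (use \<delta> in simp)
qed

lemma phi_integral_tendsto_at_top:
  fixes g g1 g2 :: "real \<Rightarrow> real"
  assumes g: "\<And>v. v \<in> {0<..<1} \<Longrightarrow> (g has_real_derivative g1 v) (at v)"
    and g1: "\<And>v. v \<in> {0<..<1} \<Longrightarrow> (g1 has_real_derivative g2 v) (at v)"
    and cont: "continuous_on {0<..<1} g2"
    and neg: "\<And>v. v \<in> {0<..<1} \<Longrightarrow> g1 v < 0"
    and "0 < d" and anti: "antimono_on {0<..<d} g2"
    and lim: "filterlim g at_top (at_right 0)"
    and u: "u1 \<in> {0<..<1}" "u2 \<in> {0<..<1}" "u3 \<in> {0<..<1}"
  shows "filterlim (\<lambda>xi. phi_integral g2 xi u1 u2 u3) at_top (at_right 0)"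
proof -
  obtain K \<epsilon> where "0 < \<epsilon>" and K: "\<And>xi. 0 < xi \<Longrightarrow> xi \<le> \<epsilon> \<Longrightarrow> K + g (4 * xi) / 4 \<le> phi_integral g2 xi u1 u2 u3"
    using phi_integral_lower_bound[OF g g1 cont neg \<open>0 < d\<close> anti u] by blast
  have "eventually (\<lambda>xi. K + g (4 * xi) / 4 \<le> phi_integral g2 xi u1 u2 u3) (at_right 0)"
    unfolding eventually_at_right_field using \<open>0 < \<epsilon>\<close> K by (intro exI[of _ \<epsilon>]) auto
  moreover have "filterlim (\<lambda>xi. 4 * xi) (at_right 0) (at_right (0::real))"
    by (rule filterlim_times_pos[OF filterlim_ident]) simp_all
  then have "filterlim (\<lambda>xi. g (4 * xi)) at_top (at_right 0)"
    by (rule filterlim_compose[OF lim])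
  then have "filterlim (\<lambda>xi. g (4 * xi) * (1/4)) at_top (at_right 0)"
    by (rule filterlim_at_top_mult_tendsto_pos[OF tendsto_const, rotated]) simp
  then have "filterlim (\<lambda>xi. K + g (4 * xi) / 4) at_top (at_right 0)"
    using filterlim_tendsto_add_at_top[OF tendsto_const] by simp
  ultimately show ?thesis
    by (rule filterlim_at_top_mono[rotated])
qed

lemma deriv2_H:
  assumes smooth: "smooth_on {0<..<1} f" and u: "u \<in> {0<..<1}"
  shows "(deriv ^^ 2) (H f t x) u = - 60 * t - (deriv ^^ 2) f u"
proof -
  have dH: "deriv (H f t x) v = - 60 * t * v - deriv f v" if "v \<in> {0<..<1}" for v
  proof (rule DERIV_imp_deriv)
    show "(H f t x has_real_derivative - 60 * t * v - deriv f v) (at v)"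
      unfolding H_def[abs_def]
      apply (intro smooth_on_low_order_derivatives(1)[OF smooth that, THEN DERIV_cong]
          derivative_eq_intros refl)
      apply (rule refl | simp)+
      done
  qed
  have "((\<lambda>v. - 60 * t * v - deriv f v) has_real_derivative - 60 * t - (deriv ^^ 2) f u) (at u)"
    apply (intro smooth_on_low_order_derivatives(2)[OF smooth u, THEN DERIV_cong]
        derivative_eq_intros refl)
    apply (rule refl | simp)+
    done
  then have "(deriv (H f t x) has_real_derivative - 60 * t - (deriv ^^ 2) f u) (at u)"
    by (rule has_field_derivative_transform_within_open[of _ _ _ "{0<..<1}"]) (use u dH in auto)
  then show ?thesis
    by (simp add: numeral_2_eq_2 DERIV_imp_deriv)
qed

lemma Phi1_eq_phi_integral:
  assumes smooth: "smooth_on {0<..<1} f"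
    and in01: "xi \<in> {0<..<1}" "u1 \<in> {0<..<1}" "u2 \<in> {0<..<1}" "u3 \<in> {0<..<1}"
  shows "Phi1 f t x xi u1 u2 u3
           = Mconst * (- 60 * t * (LINT m:cube3|lborel. phi_weight m) - phi_integral ((deriv ^^ 2) f) xi u1 u2 u3)"
proof -
  have "Phi1 f t x xi u1 u2 u3 = Mconst * phi_integral (\<lambda>v. - (deriv ^^ 2) f v + - 60 * t) xi u1 u2 u3"
    unfolding Phi1_def phi_integral_def[symmetric]
    using deriv2_H[OF smooth] in01 by (intro arg_cong[where f = "(*) Mconst"] phi_integral_cong) auto
  also have "\<dots> = Mconst * (phi_integral (\<lambda>v. - (deriv ^^ 2) f v) xi u1 u2 u3
                             + - 60 * t * (LINT m:cube3|lborel. phi_weight m))"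
    using continuous_on_minus[OF smooth_on_continuous_on[OF smooth]] in01
    by (subst phi_integral_add_const) auto
  finally show ?thesis
    by (simp add: phi_integral_uminus)
qed

lemma phi_integral_deriv2_at_right_0:
  assumes "standing_assumptions f" and u: "u1 \<in> {0<..<1}" "u2 \<in> {0<..<1}" "u3 \<in> {0<..<1}"
  shows "filterlim (\<lambda>xi. phi_integral ((deriv ^^ 2) f) xi u1 u2 u3) at_top (at_right 0)"
proof -
  obtain d where smooth: "smooth_on {0<..<1} f" and f'_neg: "\<forall>v\<in>{0<..<1}. deriv f v < 0"
    and lim: "filterlim f at_top (at_right 0)" and d: "0 < d" "\<forall>v\<in>{0<..<d}. (deriv ^^ 3) f v < 0"
    using assms(1) unfolding standing_assumptions_def by blast
  note D = smooth_on_low_order_derivatives[OF smooth]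
  show ?thesis
  proof (rule phi_integral_tendsto_at_top[OF D(1,2) smooth_on_continuous_on[OF smooth] _ _ _ lim u])
    show "deriv f v < 0" if "v \<in> {0<..<1}" for v
      using f'_neg that by blast
    show "0 < min d 1"
      using d by simp
    show "antimono_on {0<..<min d 1} ((deriv ^^ 2) f)"
      using d by (intro antimono_on_if_has_real_derivative_nonpos[OF D(3)]) (auto intro: less_imp_le)
  qed
qed

lemma antimono_on_reflected_deriv2:
  assumes smooth: "smooth_on {0<..<1} f" and neg: "\<And>v. v \<in> {1 - d<..<1} \<Longrightarrow> (deriv ^^ 3) f v < 0"
  shows "antimono_on {0<..<min d 1} (\<lambda>v. - (deriv ^^ 2) f (1 - v))"
proof (rule antimono_on_if_has_real_derivative_nonpos)
  fix v :: real assume v: "v \<in> {0<..<min d 1}"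
  then have "1 - v \<in> {0<..<1}"
    by auto
  then show "((\<lambda>v. - (deriv ^^ 2) f (1 - v)) has_real_derivative (deriv ^^ 3) f (1 - v)) (at v)"
    using DERIV_minus[OF has_real_derivative_reflect[OF smooth_on_low_order_derivatives(3)[OF smooth]]]
    by simp
  show "(deriv ^^ 3) f (1 - v) \<le> 0"
    using neg v by (auto intro: less_imp_le)
qed

lemma phi_integral_deriv2_at_left_1:
  assumes "standing_assumptions f" and u: "u1 \<in> {0<..<1}" "u2 \<in> {0<..<1}" "u3 \<in> {0<..<1}"
  shows "filterlim (\<lambda>xi. phi_integral ((deriv ^^ 2) f) xi u1 u2 u3) at_bot (at_left 1)"
proof -
  obtain d where smooth: "smooth_on {0<..<1} f" and f'_neg: "\<forall>v\<in>{0<..<1}. deriv f v < 0"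
    and lim: "filterlim f at_bot (at_left 1)" and d: "0 < d" "\<forall>v\<in>{1 - d<..<1}. (deriv ^^ 3) f v < 0"
    using assms(1) unfolding standing_assumptions_def by blast
  note D = smooth_on_low_order_derivatives[OF smooth]
  define G where "G v = - f (1 - v)" for v
  define G2 where "G2 v = - (deriv ^^ 2) f (1 - v)" for v
  have "filterlim (\<lambda>eta. phi_integral G2 eta (1 - u1) (1 - u2) (1 - u3)) at_top (at_right 0)"
  proof (rule phi_integral_tendsto_at_top)
    fix v :: real assume "v \<in> {0<..<1}"
    then have v: "1 - v \<in> {0<..<1}"
      by auto
    show "(G has_real_derivative deriv f (1 - v)) (at v)"
      unfolding G_def using DERIV_minus[OF has_real_derivative_reflect[OF D(1)[OF v]]] by simp
    show "((\<lambda>v. deriv f (1 - v)) has_real_derivative G2 v) (at v)"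
      unfolding G2_def by (rule has_real_derivative_reflect[OF D(2)[OF v]])
    show "deriv f (1 - v) < 0"
      using f'_neg v by blast
  next
    show "continuous_on {0<..<1} G2"
      unfolding G2_def
      by (intro continuous_intros continuous_on_compose2[OF smooth_on_continuous_on[OF smooth]]) auto
    show "0 < min d 1"
      using d by simp
    show "antimono_on {0<..<min d 1} G2"
      unfolding G2_def using d by (intro antimono_on_reflected_deriv2 smooth) auto
    have "filterlim (\<lambda>v. f (1 - v)) at_bot (at_right 0)"
      by (rule filterlim_compose[OF lim filterlim_one_minus_at_right])
    then show "filterlim G at_top (at_right 0)"
      unfolding G_def filterlim_uminus_at_bot by simp
  qed (use u in auto)
  then have "filterlim (\<lambda>xi. phi_integral G2 (1 - xi) (1 - u1) (1 - u2) (1 - u3)) at_top (at_left 1)"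
    by (rule filterlim_compose[OF _ filterlim_one_minus_at_left])
  moreover have "phi_integral ((deriv ^^ 2) f) xi u1 u2 u3 = - phi_integral G2 (1 - xi) (1 - u1) (1 - u2) (1 - u3)"
    for xi
    unfolding G2_def by (subst phi_integral_reflect) (simp add: phi_integral_uminus)
  ultimately show ?thesis
    by (simp add: filterlim_uminus_at_bot)
qed

theorem lemma5p3:
  fixes f :: "real \<Rightarrow> real" and t x u1 u2 u3 :: real
  assumes "standing_assumptions f"
    and "t > 0"
    and "0 < u3" and "u3 < u2" and "u2 < u1" and "u1 < 1"
  shows "filterlim (\<lambda>xi. Phi1 f t x xi u1 u2 u3) at_bot (at_right 0)
       \<and> filterlim (\<lambda>xi. Phi1 f t x xi u1 u2 u3) at_top (at_left 1)"
proof -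
  have u: "u1 \<in> {0<..<1}" "u2 \<in> {0<..<1}" "u3 \<in> {0<..<1}"
    using assms(3-6) by auto
  have smooth: "smooth_on {0<..<1} f"
    using assms(1) unfolding standing_assumptions_def by blast
  define c where "c = - 60 * t * (LINT m:cube3|lborel. phi_weight m)"
  define J where "J xi = phi_integral ((deriv ^^ 2) f) xi u1 u2 u3" for xi
  have Phi1: "Mconst * (c - J xi) = Phi1 f t x xi u1 u2 u3" if "xi \<in> {0<..<1}" for xi
    unfolding c_def J_def using Phi1_eq_phi_integral[OF smooth that u] by simp
  have "eventually (\<lambda>xi. Mconst * (c - J xi) = Phi1 f t x xi u1 u2 u3) (at_right 0)"
    unfolding eventually_at_right_field by (intro exI[of _ 1]) (auto intro: Phi1)
  moreover have "filterlim (\<lambda>xi. Mconst * (c - J xi)) at_bot (at_right 0)"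
    unfolding J_def by (intro filterlim_pos_mult_const_minus(1) Mconst_pos phi_integral_deriv2_at_right_0 assms(1) u)
  ultimately have at_0: "filterlim (\<lambda>xi. Phi1 f t x xi u1 u2 u3) at_bot (at_right 0)"
    by (rule filterlim_cong[OF refl refl, THEN iffD1])
  have "eventually (\<lambda>xi. Mconst * (c - J xi) = Phi1 f t x xi u1 u2 u3) (at_left 1)"
    unfolding eventually_at_left_field by (intro exI[of _ 0]) (auto intro: Phi1)
  moreover have "filterlim (\<lambda>xi. Mconst * (c - J xi)) at_top (at_left 1)"
    unfolding J_def by (intro filterlim_pos_mult_const_minus(2) Mconst_pos phi_integral_deriv2_at_left_1 assms(1) u)
  ultimately have at_1: "filterlim (\<lambda>xi. Phi1 f t x xi u1 u2 u3) at_top (at_left 1)"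
    by (rule filterlim_cong[OF refl refl, THEN iffD1])
  show ?thesis
    using at_0 at_1 ..
qed

end
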